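(* Let $\mathbf{X}\subseteq\mathbb{R}_+^n$ be a closed interval and $\mathrm{IC}(\mathbf{a}_0,\dots,\mathbf{a}_{n-1})$ an interval circulant matrix. Then $\mathrm{IC}(\mathbf{a}_0,\dots,\mathbf{a}_{n-1})$ is tolerance $\mathbf{X}$-robust, i.e. for every $A\in\mathrm{IC}(\mathbf{a}_0,\dots,\mathbf{a}_{n-1})$ there exists $x\in\mathbf{X}$ with $x\in\mathrm{Attr}(A)$, if and only if $\mathrm{Attr}(A^{(k)})\cap\mathbf{X}\ne\emptyset$ for every $k\in\{0,\dots,n-1\}$. Equivalently, if and only if for every $k$ with $A^{(k)}\neq0$ the system $\lambda(A^{(k)})(A^{(k)})^{n^2}\otimes y=(A^{(k)})^{n^2+1}\otimes y$ has a solution $y\in\mathbf{X}$.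
   Context: Max algebra on $\mathbb{R}_+$: $\oplus=\max$, ordinary product, $A^t$ max-algebraic power; $\lambda(A)$ greatest max-algebraic eigenvalue (maximum cycle geometric mean); $\mathrm{Attr}(A)=\{x\in\mathbb{R}_+^n: A^{t+1}\otimes x=\lambda(A)A^t\otimes x\text{ for some }t\ge0\}$. A closed interval is $\mathbf{X}=\prod_i[\underline{x}_i,\overline{x}_i]\subseteq\mathbb{R}_+^n$. $\mathrm{Circ}(a_0,\dots,a_{n-1})$ has entries $A_{i,j}=a_t$, $t\equiv j-i\pmod n$; $\mathrm{IC}(\mathbf{a}_0,\dots,\mathbf{a}_{n-1})$ is the set of all $\mathrm{Circ}(a_0,\dots,a_{n-1})$ with $a_t\in\mathbf{a}_t$, each $\mathbf{a}_t\subseteq\mathbb{R}_+$ a nonempty interval of one of the forms $[\underline{a}_t,\overline{a}_t]$, $(\underline{a}_t,\overline{a}_t)$, $(\underline{a}_t,\overline{a}_t]$, $[\underline{a}_t,\overline{a}_t)$. $A^{(k)}=\mathrm{Circ}(\underline{a}_0,\dots,\underline{a}_{k-1},\overline{a}_k,\underline{a}_{k+1},\dots,\underline{a}_{n-1})$. *)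

theory Defs
  imports Complex_Main
begin

text \<open>Max algebra on nonnegative reals. Matrices of size n are functions
  nat => nat => real, vectors are nat => real; only indices < n matter.\<close>

definition mx_mult :: "nat \<Rightarrow> (nat \<Rightarrow> nat \<Rightarrow> real) \<Rightarrow> (nat \<Rightarrow> nat \<Rightarrow> real) \<Rightarrow> (nat \<Rightarrow> nat \<Rightarrow> real)" where
  "mx_mult n A B = (\<lambda>i j. MAX k\<in>{..<n}. A i k * B k j)"

definition mx_vec :: "nat \<Rightarrow> (nat \<Rightarrow> nat \<Rightarrow> real) \<Rightarrow> (nat \<Rightarrow> real) \<Rightarrow> (nat \<Rightarrow> real)" where
  "mx_vec n A x = (\<lambda>i. MAX k\<in>{..<n}. A i k * x k)"

definition mx_id :: "nat \<Rightarrow> nat \<Rightarrow> real" where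
  "mx_id = (\<lambda>i j. if i = j then 1 else 0)"

primrec mx_pow :: "nat \<Rightarrow> (nat \<Rightarrow> nat \<Rightarrow> real) \<Rightarrow> nat \<Rightarrow> (nat \<Rightarrow> nat \<Rightarrow> real)" where
  "mx_pow n A 0 = mx_id"
| "mx_pow n A (Suc t) = mx_mult n A (mx_pow n A t)"

text \<open>Maximum cycle geometric mean: cycles (closed walks) of length k, 1 <= k <= n,
  given as lists of nodes.\<close>
definition mx_lambda :: "nat \<Rightarrow> (nat \<Rightarrow> nat \<Rightarrow> real) \<Rightarrow> real" where
  "mx_lambda n A = Max {root k (\<Prod>j<k. A (cs ! j) (cs ! ((j + 1) mod k))) | k cs.
      1 \<le> k \<and> k \<le> n \<and> length cs = k \<and> set cs \<subseteq> {..<n}}"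

definition nonneg_vec :: "nat \<Rightarrow> (nat \<Rightarrow> real) \<Rightarrow> bool" where
  "nonneg_vec n x \<longleftrightarrow> (\<forall>i<n. 0 \<le> x i)"

definition vec_eq :: "nat \<Rightarrow> (nat \<Rightarrow> real) \<Rightarrow> (nat \<Rightarrow> real) \<Rightarrow> bool" where
  "vec_eq n x y \<longleftrightarrow> (\<forall>i<n. x i = y i)"

definition Attr :: "nat \<Rightarrow> (nat \<Rightarrow> nat \<Rightarrow> real) \<Rightarrow> (nat \<Rightarrow> real) set" where
  "Attr n A = {x. nonneg_vec n x \<and> (\<exists>t. vec_eq n (mx_vec n (mx_pow n A (Suc t)) x)
                     (\<lambda>i. mx_lambda n A * mx_vec n (mx_pow n A t) x i))}"

definition box :: "nat \<Rightarrow> (nat \<Rightarrow> real) \<Rightarrow> (nat \<Rightarrow> real) \<Rightarrow> (nat \<Rightarrow> real) set" where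
  "box n lo hi = {x. \<forall>i<n. lo i \<le> x i \<and> x i \<le> hi i}"

definition Circ :: "nat \<Rightarrow> (nat \<Rightarrow> real) \<Rightarrow> (nat \<Rightarrow> nat \<Rightarrow> real)" where
  "Circ n a = (\<lambda>i j. a ((j + n - i) mod n))"

definition ival :: "real \<Rightarrow> real \<Rightarrow> bool \<Rightarrow> bool \<Rightarrow> real set" where
  "ival lo hi lc rc = {x. (if lc then lo \<le> x else lo < x) \<and> (if rc then x \<le> hi else x < hi)}"

definition IC :: "nat \<Rightarrow> (nat \<Rightarrow> real) \<Rightarrow> (nat \<Rightarrow> real) \<Rightarrow> (nat \<Rightarrow> bool) \<Rightarrow> (nat \<Rightarrow> bool)
    \<Rightarrow> (nat \<Rightarrow> nat \<Rightarrow> real) set" where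
  "IC n alo ahi lc rc = {Circ n a | a. \<forall>t<n. a t \<in> ival (alo t) (ahi t) (lc t) (rc t)}"

definition Ak :: "nat \<Rightarrow> (nat \<Rightarrow> real) \<Rightarrow> (nat \<Rightarrow> real) \<Rightarrow> nat \<Rightarrow> (nat \<Rightarrow> nat \<Rightarrow> real)" where
  "Ak n alo ahi k = Circ n (\<lambda>t. if t = k then ahi t else alo t)"

definition tol_robust :: "nat \<Rightarrow> (nat \<Rightarrow> nat \<Rightarrow> real) set \<Rightarrow> (nat \<Rightarrow> real) set \<Rightarrow> bool" where
  "tol_robust n \<AA> X \<longleftrightarrow> (\<forall>A\<in>\<AA>. \<exists>x\<in>X. x \<in> Attr n A)"

definition is_zero_mx :: "nat \<Rightarrow> (nat \<Rightarrow> nat \<Rightarrow> real) \<Rightarrow> bool" where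
  "is_zero_mx n A \<longleftrightarrow> (\<forall>i<n. \<forall>j<n. A i j = 0)"

end

theory Submission
  imports Defs "HOL-Number_Theory.Cong"
begin

text \<open>For a circulant A = Circ(a), (A^s \<otimes> x)_i is the maximum, over words u_1 ... u_s of
  residues mod n, of a_{u_1} \<cdots> a_{u_s} x_{i + u_1 + \<dots> + u_s}, and \<lambda>(A) = max_t a_t. Dividing by a
  peak entry a_m gives weights q \<le> 1 with q_0 = 1. The corresponding word maxima W_q^s(x) increase
  with s and are stable from s = n - 1 on, because any n residues contain a consecutive block with
  sum 0 mod n, which can be deleted. Consequently x \<in> Attr(A) iff W_q^{n-1}(x) is invariant under
  rotation by m, and a single equation A^{N+1} x = \<lambda>(A) A^N x with N \<ge> n - 1 decides membership.

  If q' \<le> q pointwise then W_q^{n-1}(W_{q'}^{n-1}(x)) = W_q^{n-1}(x), so rotation invariance passes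
  from q' to q. Among the members of IC peaking at m, A^{(m)} has the smallest normalised weights,
  hence attracts the fewest vectors; this gives sufficiency. For necessity, A^{(k)} is a limit of
  members of IC, the deciding equation is closed, and X is compact.\<close>

lemma mod_add_right_cancel_nat: "((a::nat) + c) mod n = (b + c) mod n \<Longrightarrow> a mod n = b mod n"
  using cong_add_rcancel_nat unfolding cong_def by blast

lemma image_rotate_lessThan: "0 < n \<Longrightarrow> (\<lambda>u. (u + m) mod n) ` {..<n} = {..<(n::nat)}"
  by (intro endo_inj_surj) (auto simp: inj_on_def dest!: mod_add_right_cancel_nat)

lemma Circ_index: "i < n \<Longrightarrow> t < (n::nat) \<Longrightarrow> ((i + t) mod n + n - i) mod n = t"
proof -
  assume "i < n" "t < n"
  then have "((i + t) mod n + n - i + i) mod n = (t + i) mod n"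
    by (simp add: mod_add_left_eq add.commute)
  then have "((i + t) mod n + n - i) mod n = t mod n" by (rule mod_add_right_cancel_nat)
  then show ?thesis using \<open>t < n\<close> by simp
qed

lemma Max_lessThan_upper: "t < (n::nat) \<Longrightarrow> f t \<le> (MAX u\<in>{..<n}. f u)"
  by (intro Max_ge) auto

lemma Max_lessThan_attained: "0 < (n::nat) \<Longrightarrow> \<exists>u<n. (MAX u\<in>{..<n}. f u) = (f u :: 'a::linorder)"
proof -
  assume "0 < n"
  then have "(MAX u\<in>{..<n}. f u) \<in> f ` {..<n}" by (intro Max_in) auto
  then show ?thesis by auto
qed

lemma Max_mult_left:
  assumes "finite A" "A \<noteq> {}" "0 \<le> (c::real)"
  shows "(MAX u\<in>A. c * f u) = c * (MAX u\<in>A. f u)"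
proof -
  have "mono ((*) c)" using assms(3) by (auto simp: mono_def mult_left_mono)
  from mono_Max_commute[OF this, of "f ` A"] assms(1,2) show ?thesis by (simp add: image_image)
qed

lemma tendsto_Max_finite:
  assumes "finite K" "K \<noteq> {}" "\<forall>k\<in>K. ((\<lambda>m. f m k) \<longlongrightarrow> (g k :: real)) F"
  shows "((\<lambda>m. MAX k\<in>K. f m k) \<longlongrightarrow> (MAX k\<in>K. g k)) F"
  using assms
proof (induction K rule: finite_ne_induct)
  case (insert x K)
  then have "((\<lambda>m. max (f m x) (MAX k\<in>K. f m k)) \<longlongrightarrow> max (g x) (MAX k\<in>K. g k)) F"
    by (intro tendsto_max) auto
  then show ?case using insert by simp
qed simp

lemma tendsto_prod_list:
  "\<forall>u\<in>set ws. (\<lambda>m. q m u) \<longlonglongrightarrow> (c u :: real) \<Longrightarrow>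
    (\<lambda>m. prod_list (map (q m) ws)) \<longlonglongrightarrow> prod_list (map c ws)"
  by (induction ws) (auto intro: tendsto_mult)

lemma prod_list_map_le_1:
  "\<forall>u\<in>set ws. 0 \<le> q u \<and> q u \<le> 1 \<Longrightarrow> prod_list (map q ws :: real list) \<le> 1"
  by (induction ws) (auto intro!: mult_le_one prod_list_nonneg)

lemma prod_list_map_mono:
  "\<forall>u\<in>set ws. 0 \<le> p u \<and> p u \<le> q u \<Longrightarrow> prod_list (map p ws :: real list) \<le> prod_list (map q ws)"
  by (induction ws) (auto intro!: mult_mono prod_list_nonneg)

lemma bounded_vec_seq_convergent_subseq:
  fixes x :: "nat \<Rightarrow> nat \<Rightarrow> real"
  assumes "\<forall>m i. i < n \<longrightarrow> lo i \<le> x m i \<and> x m i \<le> hi i"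
  shows "\<exists>r. strict_mono r \<and> (\<forall>i<n. convergent (\<lambda>j. x (r j) i))"
  using assms
proof (induction n)
  case 0
  show ?case by (intro exI[of _ id]) (auto simp: strict_mono_def)
next
  case (Suc n)
  then obtain r where r: "strict_mono r" "\<forall>i<n. convergent (\<lambda>j. x (r j) i)" by auto
  obtain f where f: "strict_mono f" "monoseq (\<lambda>j. x (r (f j)) n)"
    using seq_monosub[of "\<lambda>j. x (r j) n"] by blast
  have "Bseq (\<lambda>j. x (r (f j)) n)"
  proof (rule BseqI')
    fix j
    have "lo n \<le> x (r (f j)) n \<and> x (r (f j)) n \<le> hi n" using Suc.prems by simp
    then show "norm (x (r (f j)) n) \<le> max \<bar>lo n\<bar> \<bar>hi n\<bar>" by auto
  qed
  then have "convergent (\<lambda>j. x (r (f j)) n)" using f(2) by (rule Bseq_monoseq_convergent)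
  moreover have "\<forall>i<n. convergent (\<lambda>j. x (r (f j)) i)"
    using r(2) f(1) convergent_subseq_convergent[of _ f] by (auto simp: o_def)
  ultimately have "\<forall>i<Suc n. convergent (\<lambda>j. x ((r \<circ> f) j) i)" by (auto simp: less_Suc_eq)
  moreover have "strict_mono (r \<circ> f)" using r(1) f(1) by (rule strict_mono_o)
  ultimately show ?case by blast
qed

section \<open>Maximal weights of walks on a cycle\<close>

definition words :: "nat \<Rightarrow> nat \<Rightarrow> nat list set" where
  "words n s = {ws. set ws \<subseteq> {..<n} \<and> length ws = s}"

text \<open>word_max n c s x i = (Circ(c)^s \<otimes> x)_i (mx_vec_pow_Circ): a word u_1 ... u_s encodes the
  walk i \<rightarrow> i + u_1 \<rightarrow> \<dots> (mod n) with arc weights c_{u_1}, ..., c_{u_s}.\<close>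
definition word_max :: "nat \<Rightarrow> (nat \<Rightarrow> real) \<Rightarrow> nat \<Rightarrow> (nat \<Rightarrow> real) \<Rightarrow> nat \<Rightarrow> real" where
  "word_max n c s x i = (MAX ws\<in>words n s. prod_list (map c ws) * x ((i + sum_list ws) mod n))"

lemma finite_words: "finite (words n s)"
  unfolding words_def by (rule finite_lists_length_eq) simp

lemma replicate_in_words: "0 < n \<Longrightarrow> replicate s 0 \<in> words n s"
  unfolding words_def by auto

lemma Cons_in_words_Suc: "u # ws \<in> words n (Suc s) \<longleftrightarrow> u < n \<and> ws \<in> words n s"
  unfolding words_def by auto

lemma words_SucE:
  assumes "ws \<in> words n (Suc s)"
  obtains u ws' where "ws = u # ws'" "u < n" "ws' \<in> words n s"
  using assms unfolding words_def by (cases ws) auto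

lemma word_max_upper:
  "ws \<in> words n s \<Longrightarrow> prod_list (map c ws) * x ((i + sum_list ws) mod n) \<le> word_max n c s x i"
  unfolding word_max_def using finite_words by (intro Max_ge) auto

lemma word_max_attained:
  assumes "0 < n"
  obtains ws where "ws \<in> words n s" "word_max n c s x i = prod_list (map c ws) * x ((i + sum_list ws) mod n)"
proof -
  have "word_max n c s x i \<in> (\<lambda>ws. prod_list (map c ws) * x ((i + sum_list ws) mod n)) ` words n s"
    unfolding word_max_def using finite_words replicate_in_words[OF assms] by (intro Max_in) auto
  then show ?thesis using that by auto
qed

lemma word_max_least:
  "0 < n \<Longrightarrow> (\<And>ws. ws \<in> words n s \<Longrightarrow> prod_list (map c ws) * x ((i + sum_list ws) mod n) \<le> b)
    \<Longrightarrow> word_max n c s x i \<le> b"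
  by (metis word_max_attained)

lemma word_max_0: "word_max n c 0 x i = x (i mod n)"
  unfolding word_max_def words_def by simp

lemma word_max_mod: "word_max n c s x (i mod n) = word_max n c s x i"
  unfolding word_max_def by (simp add: mod_add_left_eq)

lemma word_max_cong_vec: "0 < n \<Longrightarrow> \<forall>k<n. x k = y k \<Longrightarrow> word_max n c s x i = word_max n c s y i"
  unfolding word_max_def by (intro arg_cong[where f = Max] image_cong) simp_all

lemma word_max_rotate: "word_max n c s x ((i + m) mod n) = word_max n c s (\<lambda>k. x ((k + m) mod n)) i"
  unfolding word_max_def
  by (intro arg_cong[where f = Max] image_cong refl) (simp add: mod_simps ac_simps)

lemma word_max_nonneg:
  assumes "0 < n" "\<forall>u<n. 0 \<le> c u" "nonneg_vec n x"
  shows "0 \<le> word_max n c s x i"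
proof -
  have "0 \<le> prod_list (map c (replicate s 0)) * x ((i + sum_list (replicate s (0::nat))) mod n)"
    using assms by (intro mult_nonneg_nonneg prod_list_nonneg) (auto simp: nonneg_vec_def)
  also have "\<dots> \<le> word_max n c s x i" by (intro word_max_upper replicate_in_words assms(1))
  finally show ?thesis .
qed

lemma word_max_mono:
  assumes n: "0 < n" and c: "\<forall>u<n. 0 \<le> p u \<and> p u \<le> c u"
    and x: "nonneg_vec n x" and xy: "\<forall>k<n. x k \<le> y k"
  shows "word_max n p s x i \<le> word_max n c s y i"
proof (rule word_max_least[OF n])
  fix ws assume ws: "ws \<in> words n s"
  then have "\<forall>u\<in>set ws. 0 \<le> p u \<and> p u \<le> c u" using c by (auto simp: words_def)
  then have "prod_list (map p ws) \<le> prod_list (map c ws)" "0 \<le> prod_list (map p ws)"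
    by (auto intro!: prod_list_map_mono prod_list_nonneg)
  moreover have "0 \<le> x ((i + sum_list ws) mod n)" "x ((i + sum_list ws) mod n) \<le> y ((i + sum_list ws) mod n)"
    using x xy n by (auto simp: nonneg_vec_def)
  ultimately have "prod_list (map p ws) * x ((i + sum_list ws) mod n)
      \<le> prod_list (map c ws) * y ((i + sum_list ws) mod n)" by (metis mult_mono')
  also have "\<dots> \<le> word_max n c s y i" using ws by (rule word_max_upper)
  finally show "prod_list (map p ws) * x ((i + sum_list ws) mod n) \<le> word_max n c s y i" .
qed

lemma word_max_Suc:
  assumes n: "0 < n" and c: "\<forall>u<n. 0 \<le> c u"
  shows "word_max n c (Suc s) x i = (MAX u\<in>{..<n}. c u * word_max n c s x ((i + u) mod n))"
proof (rule antisym)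
  show "word_max n c (Suc s) x i \<le> (MAX u\<in>{..<n}. c u * word_max n c s x ((i + u) mod n))"
  proof (rule word_max_least[OF n])
    fix ws assume "ws \<in> words n (Suc s)"
    then obtain u ws' where ws: "ws = u # ws'" "u < n" "ws' \<in> words n s" by (rule words_SucE)
    have "prod_list (map c ws) * x ((i + sum_list ws) mod n)
        = c u * (prod_list (map c ws') * x (((i + u) mod n + sum_list ws') mod n))"
      using ws by (simp add: mod_simps add.assoc)
    also have "\<dots> \<le> c u * word_max n c s x ((i + u) mod n)"
      using ws c by (intro mult_left_mono word_max_upper) auto
    also have "\<dots> \<le> (MAX u\<in>{..<n}. c u * word_max n c s x ((i + u) mod n))"
      using ws by (intro Max_lessThan_upper)
    finally show "prod_list (map c ws) * x ((i + sum_list ws) mod n) \<le> \<dots>" .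
  qed
next
  obtain u where u: "u < n" "(MAX u\<in>{..<n}. c u * word_max n c s x ((i + u) mod n))
      = c u * word_max n c s x ((i + u) mod n)"
    using Max_lessThan_attained[OF n] by blast
  obtain ws where ws: "ws \<in> words n s"
    "word_max n c s x ((i + u) mod n) = prod_list (map c ws) * x (((i + u) mod n + sum_list ws) mod n)"
    using word_max_attained[OF n] by blast
  have "(MAX u\<in>{..<n}. c u * word_max n c s x ((i + u) mod n))
      = prod_list (map c (u # ws)) * x ((i + sum_list (u # ws)) mod n)"
    using u ws by (simp add: mod_simps add.assoc)
  also have "\<dots> \<le> word_max n c (Suc s) x i"
    using u ws by (intro word_max_upper) (simp add: Cons_in_words_Suc)
  finally show "(MAX u\<in>{..<n}. c u * word_max n c s x ((i + u) mod n)) \<le> word_max n c (Suc s) x i" .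
qed

lemma word_max_add:
  assumes n: "0 < n" and c: "\<forall>u<n. 0 \<le> c u"
  shows "word_max n c s (word_max n c r x) i = word_max n c (s + r) x i"
proof (induction s arbitrary: i)
  case 0
  show ?case by (simp add: word_max_0 word_max_mod)
next
  case (Suc s)
  then show ?case by (simp add: word_max_Suc[OF n c])
qed

lemma tendsto_word_max:
  assumes n: "0 < n" and c: "\<forall>u<n. (\<lambda>m. c m u) \<longlonglongrightarrow> d u"
    and x: "\<forall>k<n. (\<lambda>m. x m k) \<longlonglongrightarrow> y k"
  shows "(\<lambda>m. word_max n (c m) s (x m) i) \<longlonglongrightarrow> word_max n d s y i"
  unfolding word_max_def
proof (rule tendsto_Max_finite[OF finite_words])
  show "words n s \<noteq> {}" using replicate_in_words[OF n] by blast
  show "\<forall>ws\<in>words n s. (\<lambda>m. prod_list (map (c m) ws) * x m ((i + sum_list ws) mod n))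
      \<longlonglongrightarrow> prod_list (map d ws) * y ((i + sum_list ws) mod n)"
  proof
    fix ws assume "ws \<in> words n s"
    then have "(\<lambda>m. prod_list (map (c m) ws)) \<longlonglongrightarrow> prod_list (map d ws)"
      using c by (intro tendsto_prod_list) (auto simp: words_def)
    moreover have "(\<lambda>m. x m ((i + sum_list ws) mod n)) \<longlonglongrightarrow> y ((i + sum_list ws) mod n)"
      using x n by simp
    ultimately show "(\<lambda>m. prod_list (map (c m) ws) * x m ((i + sum_list ws) mod n))
        \<longlonglongrightarrow> prod_list (map d ws) * y ((i + sum_list ws) mod n)" by (rule tendsto_mult)
  qed
qed

section \<open>Max-algebraic products with circulants\<close>

definition nonneg_mx :: "(nat \<Rightarrow> nat \<Rightarrow> real) \<Rightarrow> bool" where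
  "nonneg_mx A \<longleftrightarrow> (\<forall>i j. 0 \<le> A i j)"

lemma nonneg_mx_mult: "0 < n \<Longrightarrow> nonneg_mx A \<Longrightarrow> nonneg_mx B \<Longrightarrow> nonneg_mx (mx_mult n A B)"
  unfolding nonneg_mx_def mx_mult_def
  by (metis (no_types, lifting) Max_lessThan_upper mult_nonneg_nonneg order_trans)

lemma nonneg_mx_pow: "0 < n \<Longrightarrow> nonneg_mx A \<Longrightarrow> nonneg_mx (mx_pow n A s)"
proof (induction s)
  case 0
  show ?case by (simp add: nonneg_mx_def mx_id_def)
next
  case (Suc s)
  then show ?case by (simp add: nonneg_mx_mult)
qed

lemma nonneg_mx_Circ: "0 < n \<Longrightarrow> \<forall>t<n. 0 \<le> c t \<Longrightarrow> nonneg_mx (Circ n c)"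
  unfolding nonneg_mx_def Circ_def by auto

lemma mx_vec_cong: "\<forall>k<n. x k = y k \<Longrightarrow> mx_vec n A x i = mx_vec n A y i"
  unfolding mx_vec_def by simp

lemma mx_vec_scale: "0 < n \<Longrightarrow> 0 \<le> c \<Longrightarrow> mx_vec n A (\<lambda>k. c * x k) i = c * mx_vec n A x i"
proof -
  assume "0 < n" "0 \<le> c"
  have "mx_vec n A (\<lambda>k. c * x k) i = (MAX k\<in>{..<n}. c * (A i k * x k))"
    unfolding mx_vec_def by (intro arg_cong[where f = Max] image_cong refl) (rule mult.left_commute)
  also have "\<dots> = c * mx_vec n A x i"
    unfolding mx_vec_def using \<open>0 < n\<close> \<open>0 \<le> c\<close> by (intro Max_mult_left) auto
  finally show ?thesis .
qed

lemma mx_vec_id: "i < n \<Longrightarrow> nonneg_vec n x \<Longrightarrow> mx_vec n mx_id x i = x i"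
  unfolding mx_vec_def
proof (rule antisym)
  assume "i < n" "nonneg_vec n x"
  then show "(MAX k\<in>{..<n}. mx_id i k * x k) \<le> x i"
    by (intro Max.boundedI) (auto simp: mx_id_def nonneg_vec_def)
  show "x i \<le> (MAX k\<in>{..<n}. mx_id i k * x k)"
    using \<open>i < n\<close> Max_lessThan_upper[of i n "\<lambda>k. mx_id i k * x k"] by (simp add: mx_id_def)
qed

lemma mx_vec_mult:
  assumes n: "0 < n" and A: "nonneg_mx A" and B: "nonneg_mx B" and x: "nonneg_vec n x"
  shows "mx_vec n (mx_mult n A B) x i = mx_vec n A (mx_vec n B x) i"
proof (rule antisym)
  show "mx_vec n (mx_mult n A B) x i \<le> mx_vec n A (mx_vec n B x) i"
    unfolding mx_vec_def
  proof (rule Max.boundedI)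
    fix z assume "z \<in> (\<lambda>k. mx_mult n A B i k * x k) ` {..<n}"
    then obtain k where k: "k < n" "z = mx_mult n A B i k * x k" by auto
    obtain l where l: "l < n" "mx_mult n A B i k = A i l * B l k"
      using Max_lessThan_attained[OF n, of "\<lambda>l. A i l * B l k"] unfolding mx_mult_def by blast
    have "z = A i l * (B l k * x k)" using k l by simp
    also have "\<dots> \<le> A i l * (MAX k\<in>{..<n}. B l k * x k)"
      using A k by (intro mult_left_mono Max_lessThan_upper) (auto simp: nonneg_mx_def)
    also have "\<dots> \<le> (MAX l\<in>{..<n}. A i l * (MAX k\<in>{..<n}. B l k * x k))"
      using l by (intro Max_lessThan_upper)
    finally show "z \<le> (MAX l\<in>{..<n}. A i l * (MAX k\<in>{..<n}. B l k * x k))" .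
  qed (use n in auto)
next
  show "mx_vec n A (mx_vec n B x) i \<le> mx_vec n (mx_mult n A B) x i"
    unfolding mx_vec_def
  proof (rule Max.boundedI)
    fix z assume "z \<in> (\<lambda>l. A i l * (MAX k\<in>{..<n}. B l k * x k)) ` {..<n}"
    then obtain l where l: "l < n" "z = A i l * (MAX k\<in>{..<n}. B l k * x k)" by auto
    obtain k where k: "k < n" "(MAX k\<in>{..<n}. B l k * x k) = B l k * x k"
      using Max_lessThan_attained[OF n, of "\<lambda>k. B l k * x k"] by blast
    have "z = (A i l * B l k) * x k" using k l by simp
    also have "\<dots> \<le> mx_mult n A B i k * x k"
      unfolding mx_mult_def using x k l
      by (intro mult_right_mono Max_lessThan_upper) (auto simp: nonneg_vec_def)
    also have "\<dots> \<le> (MAX k\<in>{..<n}. mx_mult n A B i k * x k)"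
      using k by (intro Max_lessThan_upper)
    finally show "z \<le> (MAX k\<in>{..<n}. mx_mult n A B i k * x k)" .
  qed (use n in auto)
qed

lemma mx_vec_Circ:
  assumes n: "0 < n" and i: "i < n"
  shows "mx_vec n (Circ n c) x i = (MAX t\<in>{..<n}. c t * x ((i + t) mod n))"
proof -
  have "mx_vec n (Circ n c) x i = (MAX k\<in>(\<lambda>t. (t + i) mod n) ` {..<n}. c ((k + n - i) mod n) * x k)"
    unfolding mx_vec_def Circ_def image_rotate_lessThan[OF n] ..
  also have "\<dots> = (MAX t\<in>{..<n}. c t * x ((i + t) mod n))"
    unfolding image_image
  proof (intro arg_cong[where f = Max] image_cong refl)
    fix t assume "t \<in> {..<n}"
    then have "((i + t) mod n + n - i) mod n = t" using i by (simp add: Circ_index)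
    then show "c (((t + i) mod n + n - i) mod n) * x ((t + i) mod n) = c t * x ((i + t) mod n)"
      by (simp add: add.commute)
  qed
  finally show ?thesis .
qed

lemma mx_vec_pow_Circ:
  assumes n: "0 < n" and c: "\<forall>t<n. 0 \<le> c t" and x: "nonneg_vec n x" and i: "i < n"
  shows "mx_vec n (mx_pow n (Circ n c) s) x i = word_max n c s x i"
  using i
proof (induction s arbitrary: i)
  case 0
  then show ?case using x by (simp add: mx_vec_id word_max_0)
next
  case (Suc s)
  have "mx_vec n (mx_pow n (Circ n c) (Suc s)) x i
      = mx_vec n (Circ n c) (mx_vec n (mx_pow n (Circ n c) s) x) i"
    using n c x by (simp add: mx_vec_mult nonneg_mx_Circ nonneg_mx_pow)
  also have "\<dots> = (MAX t\<in>{..<n}. c t * word_max n c s x ((i + t) mod n))"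
    using n Suc by (simp add: mx_vec_Circ)
  also have "\<dots> = word_max n c (Suc s) x i"
    using n c by (simp add: word_max_Suc)
  finally show ?case .
qed

lemma mx_lambda_Circ:
  assumes n: "0 < n" and a: "\<forall>t<n. 0 \<le> a t"
  shows "mx_lambda n (Circ n a) = (MAX t\<in>{..<n}. a t)"
proof -
  let ?M = "MAX t\<in>{..<n}. a t"
  let ?A = "Circ n a"
  let ?mean = "\<lambda>k cs. root k (\<Prod>j<k. ?A (cs ! j) (cs ! ((j + 1) mod k)))"
  let ?S = "{?mean k cs | k cs. 1 \<le> k \<and> k \<le> n \<and> length cs = k \<and> set cs \<subseteq> {..<n}}"
  have entry: "0 \<le> ?A i j \<and> ?A i j \<le> ?M" for i j
    using n a unfolding Circ_def by (auto intro: Max_lessThan_upper)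
  have "?S \<subseteq> (\<lambda>cs. ?mean (length cs) cs) ` {cs. set cs \<subseteq> {..<n} \<and> length cs \<le> n}"
    by auto
  then have fin: "finite ?S"
    by (rule finite_subset) (intro finite_imageI finite_lists_length_le; simp)
  obtain t where t: "t < n" "?M = a t" using Max_lessThan_attained[OF n, of a] by blast
  define cs where "cs = map (\<lambda>j. j * t mod n) [0..<n]"
  \<comment> \<open>the cycle 0, t, 2t, ... uses only arcs of weight a_t\<close>
  have arc: "?A (cs ! j) (cs ! ((j + 1) mod n)) = a t" if "j < n" for j
  proof -
    have "cs ! ((j + 1) mod n) = (cs ! j + t) mod n"
      using n that by (simp add: cs_def mod_simps algebra_simps)
    moreover have "cs ! j < n" using n that by (simp add: cs_def)
    ultimately show ?thesis unfolding Circ_def using Circ_index[OF _ t(1)] by simp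
  qed
  have mem: "?mean n cs \<in> ?S" using n by (fastforce simp: cs_def)
  have mean: "?mean n cs = ?M"
  proof -
    have "?mean n cs = root n (a t ^ n)" using arc by simp
    also have "\<dots> = ?M" using n a t by (simp add: real_root_power_cancel)
    finally show ?thesis .
  qed
  have "?M \<le> Max ?S" using Max_ge[OF fin mem] unfolding mean .
  moreover have "Max ?S \<le> ?M"
  proof (rule Max.boundedI[OF fin])
    show "?S \<noteq> {}" using mem by blast
    fix z assume "z \<in> ?S"
    then obtain k cs where k: "z = ?mean k cs" "1 \<le> k" by blast
    have "(\<Prod>j<k. ?A (cs ! j) (cs ! ((j + 1) mod k))) \<le> ?M ^ k"
      using prod_mono[of "{..<k}" "\<lambda>j. ?A (cs ! j) (cs ! ((j + 1) mod k))" "\<lambda>_. ?M"] entry by simp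
    then have "z \<le> root k (?M ^ k)" using k by (simp add: real_root_le_mono)
    also have "\<dots> = ?M" using k entry[of 0 0] by (simp add: real_root_power_cancel)
    finally show "z \<le> ?M" .
  qed
  ultimately show ?thesis unfolding mx_lambda_def by simp
qed

definition eigen_step :: "nat \<Rightarrow> (nat \<Rightarrow> nat \<Rightarrow> real) \<Rightarrow> (nat \<Rightarrow> real) \<Rightarrow> nat \<Rightarrow> bool" where
  "eigen_step n A x t \<longleftrightarrow>
     vec_eq n (mx_vec n (mx_pow n A (Suc t)) x) (\<lambda>i. mx_lambda n A * mx_vec n (mx_pow n A t) x i)"

lemma Attr_iff_eigen_step: "x \<in> Attr n A \<longleftrightarrow> nonneg_vec n x \<and> (\<exists>t. eigen_step n A x t)"
  unfolding Attr_def eigen_step_def by simp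

lemma eigen_step_Suc:
  assumes n: "0 < n" and A: "nonneg_mx A" and lam: "0 \<le> mx_lambda n A" and x: "nonneg_vec n x"
    and step: "eigen_step n A x t"
  shows "eigen_step n A x (Suc t)"
  unfolding eigen_step_def vec_eq_def
proof (intro allI impI)
  fix i assume "i < n"
  have "mx_vec n (mx_pow n A (Suc (Suc t))) x i = mx_vec n A (mx_vec n (mx_pow n A (Suc t)) x) i"
    by (subst mx_pow.simps(2)) (rule mx_vec_mult[OF n A nonneg_mx_pow[OF n A] x])
  also have "\<dots> = mx_vec n A (\<lambda>k. mx_lambda n A * mx_vec n (mx_pow n A t) x k) i"
    using step unfolding eigen_step_def vec_eq_def by (rule mx_vec_cong)
  also have "\<dots> = mx_lambda n A * mx_vec n (mx_pow n A (Suc t)) x i"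
    using n lam A x by (simp add: mx_vec_scale mx_vec_mult nonneg_mx_pow)
  finally show "mx_vec n (mx_pow n A (Suc (Suc t))) x i = mx_lambda n A * mx_vec n (mx_pow n A (Suc t)) x i" .
qed

lemma eigen_step_Circ_iff:
  assumes n: "0 < n" and c: "\<forall>t<n. 0 \<le> c t" and x: "nonneg_vec n x"
  shows "eigen_step n (Circ n c) x s
    \<longleftrightarrow> (\<forall>i<n. word_max n c (Suc s) x i = (MAX t\<in>{..<n}. c t) * word_max n c s x i)"
  unfolding eigen_step_def vec_eq_def mx_lambda_Circ[OF n c]
  using mx_vec_pow_Circ[OF n c x] by (simp del: mx_pow.simps)

lemma eigen_step_Circ_zero:
  assumes n: "0 < n" and c: "\<forall>t<n. c t = 0" and x: "nonneg_vec n x"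
  shows "eigen_step n (Circ n c) x s"
proof -
  have c_nonneg: "\<forall>t<n. 0 \<le> c t" using c by simp
  have "c ` {..<n} = {0}" using n c by auto
  then have max0: "(MAX t\<in>{..<n}. c t) = 0" by simp
  have W0: "word_max n c (Suc s) x i = 0" for i
  proof -
    have "(\<lambda>u. c u * word_max n c s x ((i + u) mod n)) ` {..<n} = {0}" using n c by auto
    then show ?thesis by (simp add: word_max_Suc[OF n c_nonneg])
  qed
  show ?thesis unfolding eigen_step_Circ_iff[OF n c_nonneg x] max0 W0 by simp
qed

lemma eigen_step_mono:
  assumes "0 < n" "nonneg_mx A" "0 \<le> mx_lambda n A" "nonneg_vec n x"
    and "eigen_step n A x t" "t \<le> t'"
  shows "eigen_step n A x t'"
  using \<open>t \<le> t'\<close> \<open>eigen_step n A x t\<close>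
  by (induction rule: dec_induct) (use assms(1-4) eigen_step_Suc in blast)+

section \<open>Stabilisation for weights bounded by one\<close>

lemma exists_zero_sum_block:
  assumes n: "0 < n" and len: "length ws = n"
  obtains a b where "a < b" "b \<le> n" "sum_list (take a ws) mod n = sum_list (take b ws) mod n"
proof -
  define p where "p a = sum_list (take a ws) mod n" for a
  have "\<not> inj_on p {0..n}"
  proof
    assume "inj_on p {0..n}"
    then have "card {0..n} \<le> card {..<n}"
      by (rule card_inj_on_le) (use n in \<open>auto simp: p_def\<close>)
    then show False by simp
  qed
  then obtain a b where "a \<le> n" "b \<le> n" "a \<noteq> b" "p a = p b"
    unfolding inj_on_def by auto
  then show ?thesis
    using that[of a b] that[of b a] unfolding p_def by (cases "a < b") auto
qed

locale subunit_weights =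
  fixes n :: nat and q :: "nat \<Rightarrow> real"
  assumes n_pos: "0 < n" and weights_bounded: "\<forall>u<n. 0 \<le> q u \<and> q u \<le> 1" and weight_0: "q 0 = 1"
begin

lemma weights_nonneg: "\<forall>u<n. 0 \<le> q u"
  using weights_bounded by simp

lemma word_max_le_Suc: "word_max n q s x i \<le> word_max n q (Suc s) x i"
proof -
  have "word_max n q s x i = q 0 * word_max n q s x ((i + 0) mod n)"
    by (simp add: weight_0 word_max_mod)
  also have "\<dots> \<le> (MAX u\<in>{..<n}. q u * word_max n q s x ((i + u) mod n))"
    using n_pos by (intro Max_lessThan_upper)
  also have "\<dots> = word_max n q (Suc s) x i"
    by (simp add: word_max_Suc[OF n_pos weights_nonneg])
  finally show ?thesis .
qed

lemma word_max_mono_length: "s \<le> s' \<Longrightarrow> word_max n q s x i \<le> word_max n q s' x i"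
  by (rule lift_Suc_mono_le[of "\<lambda>s. word_max n q s x i"]) (rule word_max_le_Suc)

text \<open>Deleting a block of letters with sum 0 mod n keeps the endpoint of the walk and, since all
  weights are at most 1, does not decrease its weight; the padding letters 0 have weight 1.\<close>
lemma shorten_word:
  assumes ws: "ws \<in> words n n"
  obtains vs where "vs \<in> words n (n - 1)" "sum_list vs mod n = sum_list ws mod n"
    "prod_list (map q ws) \<le> prod_list (map q vs)"
proof -
  have len: "length ws = n" and set: "set ws \<subseteq> {..<n}" using ws by (auto simp: words_def)
  obtain a b where ab: "a < b" "b \<le> n" and block: "sum_list (take a ws) mod n = sum_list (take b ws) mod n"
    using exists_zero_sum_block[OF n_pos len] .
  define vs where "vs = take a ws @ drop b ws @ replicate (b - a - 1) 0"
  have "vs \<in> words n (n - 1)"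
    using ab len set n_pos by (auto simp: vs_def words_def dest: in_set_takeD in_set_dropD)
  moreover have "sum_list vs mod n = sum_list ws mod n"
  proof -
    have "sum_list ws = sum_list (take b ws) + sum_list (drop b ws)"
      by (metis append_take_drop_id sum_list_append)
    moreover have "sum_list vs = sum_list (take a ws) + sum_list (drop b ws)"
      by (simp add: vs_def sum_list_replicate)
    ultimately show ?thesis using block by (metis mod_add_left_eq)
  qed
  moreover have "prod_list (map q ws) \<le> prod_list (map q vs)"
  proof -
    let ?Pa = "prod_list (map q (take a ws))" and ?Pk = "prod_list (map q (drop a (take b ws)))"
      and ?Pb = "prod_list (map q (drop b ws))"
    have "take b ws = take a ws @ drop a (take b ws)"
      using ab by (metis append_take_drop_id min.strict_order_iff take_take)
    then have "prod_list (map q ws) = ?Pa * ?Pk * ?Pb"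
      by (metis append_take_drop_id map_append prod_list.append)
    moreover have "prod_list (map q vs) = ?Pa * ?Pb" by (simp add: vs_def weight_0)
    moreover have bounded: "0 \<le> q u \<and> q u \<le> 1" if "u \<in> set ws" for u
      using that set weights_bounded by auto
    have "?Pk \<le> 1"
      using bounded by (intro prod_list_map_le_1) (auto dest: in_set_takeD in_set_dropD)
    moreover have "0 \<le> ?Pa * ?Pb"
      using bounded by (intro mult_nonneg_nonneg prod_list_nonneg) (auto dest: in_set_takeD in_set_dropD)
    ultimately show ?thesis using mult_left_le[of ?Pk "?Pa * ?Pb"] by (simp add: ac_simps)
  qed
  ultimately show ?thesis using that by blast
qed

lemma word_max_length_n:
  assumes x: "nonneg_vec n x"
  shows "word_max n q n x i = word_max n q (n - 1) x i"
proof (rule antisym)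
  show "word_max n q n x i \<le> word_max n q (n - 1) x i"
  proof (rule word_max_least[OF n_pos])
    fix ws assume "ws \<in> words n n"
    then obtain vs where vs: "vs \<in> words n (n - 1)" "sum_list vs mod n = sum_list ws mod n"
        "prod_list (map q ws) \<le> prod_list (map q vs)"
      by (rule shorten_word)
    have "(i + sum_list ws) mod n = (i + sum_list vs) mod n"
      using vs(2) by (metis mod_add_right_eq)
    then have "prod_list (map q ws) * x ((i + sum_list ws) mod n) \<le> prod_list (map q vs) * x ((i + sum_list vs) mod n)"
      using x n_pos vs(3) by (auto intro: mult_right_mono simp: nonneg_vec_def)
    also have "\<dots> \<le> word_max n q (n - 1) x i" using vs(1) by (rule word_max_upper)
    finally show "prod_list (map q ws) * x ((i + sum_list ws) mod n) \<le> word_max n q (n - 1) x i" .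
  qed
  show "word_max n q (n - 1) x i \<le> word_max n q n x i"
    by (rule word_max_mono_length) simp
qed

lemma word_max_stable:
  assumes x: "nonneg_vec n x" and s: "n - 1 \<le> s"
  shows "word_max n q s x i = word_max n q (n - 1) x i"
proof -
  have "word_max n q (n - 1 + d) x i = word_max n q (n - 1) x i" for d
  proof (induction d arbitrary: i)
    case (Suc d)
    have "word_max n q (Suc (n - 1 + d)) x i = word_max n q (Suc (n - 1)) x i"
      by (simp only: word_max_Suc[OF n_pos weights_nonneg] Suc.IH)
    also have "\<dots> = word_max n q (n - 1) x i"
      using n_pos word_max_length_n[OF x] by simp
    finally show ?case by simp
  qed simp
  from this[of "s - (n - 1)"] s show ?thesis by simp
qed

lemma word_max_absorb:
  assumes p: "subunit_weights n p" and pq: "\<forall>u<n. p u \<le> q u" and x: "nonneg_vec n x"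
  shows "word_max n q (n - 1) (word_max n p (n - 1) x) i = word_max n q (n - 1) x i"
proof (rule antisym)
  have p_bounds: "\<forall>u<n. 0 \<le> p u \<and> p u \<le> q u"
    using p pq by (simp add: subunit_weights_def)
  have "nonneg_vec n (word_max n p (n - 1) x)"
    unfolding nonneg_vec_def using p_bounds by (auto intro: word_max_nonneg[OF n_pos _ x])
  moreover have "\<forall>k<n. word_max n p (n - 1) x k \<le> word_max n q (n - 1) x k"
    by (intro allI impI word_max_mono[OF n_pos p_bounds x]) simp
  ultimately have "word_max n q (n - 1) (word_max n p (n - 1) x) i
      \<le> word_max n q (n - 1) (word_max n q (n - 1) x) i"
    using weights_nonneg by (intro word_max_mono[OF n_pos]) auto
  also have "\<dots> = word_max n q (n - 1 + (n - 1)) x i"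
    by (rule word_max_add[OF n_pos weights_nonneg])
  also have "\<dots> = word_max n q (n - 1) x i"
    using word_max_stable[OF x le_add1] .
  finally show "word_max n q (n - 1) (word_max n p (n - 1) x) i \<le> word_max n q (n - 1) x i" .
next
  have "x k \<le> word_max n p (n - 1) x k" if "k < n" for k
    using subunit_weights.word_max_mono_length[OF p, of 0 "n - 1" x k] that by (simp add: word_max_0)
  then show "word_max n q (n - 1) x i \<le> word_max n q (n - 1) (word_max n p (n - 1) x) i"
    using x n_pos weights_nonneg by (intro word_max_mono) auto
qed

end

section \<open>The attraction region of a circulant\<close>

definition peak_weights :: "nat \<Rightarrow> (nat \<Rightarrow> real) \<Rightarrow> nat \<Rightarrow> nat \<Rightarrow> real" where
  "peak_weights n a m u = a ((u + m) mod n) / a m"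

locale circ_peak =
  fixes n :: nat and a :: "nat \<Rightarrow> real" and m :: nat
  assumes n_pos: "0 < n" and entries_nonneg: "\<forall>t<n. 0 \<le> a t" and peak_index: "m < n"
    and peak_pos: "0 < a m" and peak_max: "\<forall>t<n. a t \<le> a m"
begin

abbreviation "q \<equiv> peak_weights n a m"

lemma subunit_peak_weights: "subunit_weights n q"
  unfolding subunit_weights_def peak_weights_def
  using n_pos entries_nonneg peak_pos peak_max peak_index by (auto simp: divide_le_eq_1)

lemma Max_entries: "(MAX t\<in>{..<n}. a t) = a m"
  using n_pos peak_index peak_max by (intro Max_eqI) auto

lemma mx_lambda: "mx_lambda n (Circ n a) = a m"
  using mx_lambda_Circ[OF n_pos entries_nonneg] Max_entries by simp

lemma word_max_normalize: "word_max n a s x i = a m ^ s * word_max n q s x ((i + s * m) mod n)"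
proof (induction s arbitrary: i)
  case 0
  show ?case by (simp add: word_max_0)
next
  case (Suc s)
  let ?j = "(i + Suc s * m) mod n"
  have "word_max n a (Suc s) x i = (MAX t\<in>{..<n}. a t * word_max n a s x ((i + t) mod n))"
    by (rule word_max_Suc[OF n_pos entries_nonneg])
  also have "\<dots> = (MAX t\<in>(\<lambda>u. (u + m) mod n) ` {..<n}. a t * word_max n a s x ((i + t) mod n))"
    by (simp only: image_rotate_lessThan[OF n_pos])
  also have "\<dots> = (MAX u\<in>{..<n}. a m ^ Suc s * (q u * word_max n q s x ((?j + u) mod n)))"
    unfolding image_image
  proof (intro arg_cong[where f = Max] image_cong refl)
    fix u
    have idx: "((i + (u + m) mod n) mod n + s * m) mod n = (?j + u) mod n"
      by (simp add: mod_simps algebra_simps)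
    have "a ((u + m) mod n) = a m * q u" using peak_pos by (simp add: peak_weights_def)
    then show "a ((u + m) mod n) * word_max n a s x ((i + (u + m) mod n) mod n)
        = a m ^ Suc s * (q u * word_max n q s x ((?j + u) mod n))"
      unfolding Suc.IH idx by (simp add: algebra_simps)
  qed
  also have "\<dots> = a m ^ Suc s * (MAX u\<in>{..<n}. q u * word_max n q s x ((?j + u) mod n))"
    using n_pos peak_pos by (intro Max_mult_left) auto
  also have "\<dots> = a m ^ Suc s * word_max n q (Suc s) x ?j"
    using subunit_weights.weights_nonneg[OF subunit_peak_weights]
    by (simp add: word_max_Suc[OF n_pos])
  finally show ?case .
qed

lemma eigen_step_iff_rotation:
  assumes x: "nonneg_vec n x"
  shows "eigen_step n (Circ n a) x s \<longleftrightarrow>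
    (\<forall>j<n. word_max n q (Suc s) x ((j + m) mod n) = word_max n q s x j)"
proof -
  have "word_max n a (Suc s) x i = a m * word_max n a s x i \<longleftrightarrow>
      word_max n q (Suc s) x (((i + s * m) mod n + m) mod n) = word_max n q s x ((i + s * m) mod n)"
    for i
  proof -
    have "(i + Suc s * m) mod n = ((i + s * m) mod n + m) mod n"
      by (simp add: mod_simps algebra_simps)
    then show ?thesis using peak_pos by (simp add: word_max_normalize)
  qed
  then have "eigen_step n (Circ n a) x s \<longleftrightarrow>
      (\<forall>j\<in>(\<lambda>i. (i + s * m) mod n) ` {..<n}. word_max n q (Suc s) x ((j + m) mod n) = word_max n q s x j)"
    using eigen_step_Circ_iff[OF n_pos entries_nonneg x] Max_entries by auto
  then show ?thesis unfolding image_rotate_lessThan[OF n_pos] by auto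
qed

definition stable_rotation_invariant :: "(nat \<Rightarrow> real) \<Rightarrow> bool" where
  "stable_rotation_invariant x \<longleftrightarrow>
     (\<forall>j<n. word_max n q (n - 1) x ((j + m) mod n) = word_max n q (n - 1) x j)"

lemma eigen_step_iff_stable_rotation_invariant:
  assumes x: "nonneg_vec n x" and s: "n - 1 \<le> s"
  shows "eigen_step n (Circ n a) x s \<longleftrightarrow> stable_rotation_invariant x"
proof -
  note stable = subunit_weights.word_max_stable[OF subunit_peak_weights x]
  have "word_max n q (Suc s) x j = word_max n q (n - 1) x j" for j by (rule stable) (use s in simp)
  moreover have "word_max n q s x j = word_max n q (n - 1) x j" for j by (rule stable[OF s])
  ultimately show ?thesis
    unfolding eigen_step_iff_rotation[OF x] stable_rotation_invariant_def by presburger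
qed

lemma Attr_iff_stable_rotation_invariant:
  assumes x: "nonneg_vec n x"
  shows "x \<in> Attr n (Circ n a) \<longleftrightarrow> stable_rotation_invariant x"
proof -
  have "eigen_step n (Circ n a) x (max t (n - 1))" if "eigen_step n (Circ n a) x t" for t
    using eigen_step_mono[OF n_pos nonneg_mx_Circ[OF n_pos entries_nonneg] _ x that] peak_pos
    by (simp add: mx_lambda)
  then show ?thesis
    using x eigen_step_iff_stable_rotation_invariant[OF x] unfolding Attr_iff_eigen_step
    by (meson max.cobounded2 order_refl)
qed

end

lemma Circ_zero_or_peak:
  assumes n: "0 < n" and a: "\<forall>t<n. 0 \<le> a t"
  obtains "\<forall>t<n. a t = 0" | m where "circ_peak n a m"
proof -
  obtain m where m: "m < n" "(MAX t\<in>{..<n}. a t) = a m"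
    using Max_lessThan_attained[OF n, of a] by blast
  have peak_max: "\<forall>t<n. a t \<le> a m" using m Max_lessThan_upper[of _ n a] by metis
  show ?thesis
  proof (cases "0 < a m")
    case True
    then have "circ_peak n a m" using n a m(1) peak_max by unfold_locales
    then show ?thesis by (rule that(2))
  next
    case False
    then have "\<forall>t<n. a t = 0" using a peak_max by (meson antisym not_less order_trans)
    then show ?thesis by (rule that(1))
  qed
qed

lemma Attr_Circ_zero: "0 < n \<Longrightarrow> \<forall>t<n. c t = 0 \<Longrightarrow> nonneg_vec n x \<Longrightarrow> x \<in> Attr n (Circ n c)"
  using eigen_step_Circ_zero unfolding Attr_iff_eigen_step by blast

theorem Attr_Circ_iff_eigen_step:
  assumes n: "0 < n" and a: "\<forall>t<n. 0 \<le> a t" and x: "nonneg_vec n x" and N: "n - 1 \<le> N"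
  shows "x \<in> Attr n (Circ n a) \<longleftrightarrow> eigen_step n (Circ n a) x N"
  using n a
proof (cases rule: Circ_zero_or_peak)
  case 1
  then show ?thesis using Attr_Circ_zero[OF n 1 x] eigen_step_Circ_zero[OF n 1 x] by blast
next
  case (2 m)
  then show ?thesis
    using circ_peak.Attr_iff_stable_rotation_invariant[OF 2 x]
      circ_peak.eigen_step_iff_stable_rotation_invariant[OF 2 x N] by simp
qed

theorem Attr_Circ_mono:
  assumes A: "circ_peak n a m" and B: "circ_peak n b m"
    and weights: "\<forall>u<n. peak_weights n b m u \<le> peak_weights n a m u"
    and x: "x \<in> Attr n (Circ n b)"
  shows "x \<in> Attr n (Circ n a)"
proof -
  interpret A: circ_peak n a m by (rule A)
  interpret B: circ_peak n b m by (rule B)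
  let ?Wa = "word_max n A.q (n - 1)" and ?Wb = "word_max n B.q (n - 1)"
  have n: "0 < n" by (rule A.n_pos)
  have x_nonneg: "nonneg_vec n x" using x by (simp add: Attr_iff_eigen_step)
  have invariant: "B.stable_rotation_invariant x"
    using x B.Attr_iff_stable_rotation_invariant[OF x_nonneg] by simp
  have absorb: "?Wa (?Wb x) i = ?Wa x i" for i
    by (rule subunit_weights.word_max_absorb[OF A.subunit_peak_weights B.subunit_peak_weights weights x_nonneg])
  have "A.stable_rotation_invariant x"
    unfolding A.stable_rotation_invariant_def
  proof (intro allI impI)
    fix j
    have "?Wa x ((j + m) mod n) = ?Wa (?Wb x) ((j + m) mod n)" by (rule absorb[symmetric])
    also have "\<dots> = ?Wa (\<lambda>k. ?Wb x ((k + m) mod n)) j" by (rule word_max_rotate)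
    also have "\<dots> = ?Wa (?Wb x) j"
      using invariant n unfolding B.stable_rotation_invariant_def by (intro word_max_cong_vec) auto
    also have "\<dots> = ?Wa x j" by (rule absorb)
    finally show "?Wa x ((j + m) mod n) = ?Wa x j" .
  qed
  then show ?thesis using A.Attr_iff_stable_rotation_invariant[OF x_nonneg] by simp
qed

section \<open>Approximation and compactness\<close>

lemma ival_bounds: "x \<in> ival lo hi lc rc \<Longrightarrow> lo \<le> x \<and> x \<le> hi"
  by (auto simp: ival_def split: if_splits)

lemma ival_nonempty_le: "ival lo hi lc rc \<noteq> {} \<Longrightarrow> lo \<le> hi"
  using ival_bounds by fastforce

lemma ival_convex_comb:
  assumes c: "lo \<le> c" "c \<le> hi" and p: "p \<in> ival lo hi lc rc" and th: "0 < th" "th \<le> (1::real)"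
  shows "(1 - th) * c + th * p \<in> ival lo hi lc rc"
proof -
  define z where "z = (1 - th) * c + th * p"
  have "z - lo - th * (p - lo) = (1 - th) * (c - lo)" by (simp add: z_def algebra_simps)
  moreover have "0 \<le> (1 - th) * (c - lo)" using c th by simp
  ultimately have lo_z: "th * (p - lo) \<le> z - lo" by linarith
  have "hi - z - th * (hi - p) = (1 - th) * (hi - c)" by (simp add: z_def algebra_simps)
  moreover have "0 \<le> (1 - th) * (hi - c)" using c th by simp
  ultimately have z_hi: "th * (hi - p) \<le> hi - z" by linarith
  have "lo \<le> p \<Longrightarrow> lo \<le> z" using lo_z th mult_nonneg_nonneg[of th "p - lo"] by linarith
  moreover have "lo < p \<Longrightarrow> lo < z" using lo_z th mult_pos_pos[of th "p - lo"] by linarith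
  moreover have "p \<le> hi \<Longrightarrow> z \<le> hi" using z_hi th mult_nonneg_nonneg[of th "hi - p"] by linarith
  moreover have "p < hi \<Longrightarrow> z < hi" using z_hi th mult_pos_pos[of th "hi - p"] by linarith
  ultimately show ?thesis using p unfolding z_def[symmetric] ival_def by auto
qed

lemma ivals_approx_seq:
  assumes nonempty: "\<forall>t<n. ival (lo t) (hi t) (lc t) (rc t) \<noteq> {}"
    and c: "\<forall>t<n. lo t \<le> c t \<and> c t \<le> hi t"
  obtains a where "\<forall>m t. t < n \<longrightarrow> a m t \<in> ival (lo t) (hi t) (lc t) (rc t)"
    "\<forall>t. (\<lambda>m. a m t) \<longlonglongrightarrow> c t"
proof -
  define p where "p t = (SOME v. v \<in> ival (lo t) (hi t) (lc t) (rc t))" for t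
  have p: "\<forall>t<n. p t \<in> ival (lo t) (hi t) (lc t) (rc t)"
    unfolding p_def using nonempty by (auto intro: someI_ex simp: ex_in_conv[symmetric])
  define th where "th m = inverse (real (Suc m))" for m
  have th: "0 < th m" "th m \<le> 1" for m
    unfolding th_def by (auto simp: inverse_le_1_iff)
  define a where "a m t = (1 - th m) * c t + th m * p t" for m t
  have "\<forall>m t. t < n \<longrightarrow> a m t \<in> ival (lo t) (hi t) (lc t) (rc t)"
    unfolding a_def using c p th by (auto intro: ival_convex_comb)
  moreover have "(\<lambda>m. a m t) \<longlonglongrightarrow> c t" for t
  proof -
    have "(\<lambda>m. (1 - th m) * c t + th m * p t) \<longlonglongrightarrow> (1 - 0) * c t + 0 * p t"
      unfolding th_def by (intro tendsto_intros LIMSEQ_inverse_real_of_nat)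
    then show ?thesis by (simp add: a_def)
  qed
  ultimately show ?thesis using that by blast
qed

lemma nonneg_vec_box: "\<forall>i<n. 0 \<le> lo i \<Longrightarrow> x \<in> box n lo hi \<Longrightarrow> nonneg_vec n x"
  unfolding box_def nonneg_vec_def by force

lemma box_convergent_subseq:
  fixes x :: "nat \<Rightarrow> nat \<Rightarrow> real"
  assumes "\<forall>m. x m \<in> box n lo hi"
  obtains r y where "strict_mono r" "y \<in> box n lo hi" "\<forall>i<n. (\<lambda>j. x (r j) i) \<longlonglongrightarrow> y i"
proof -
  have bounds: "\<forall>m i. i < n \<longrightarrow> lo i \<le> x m i \<and> x m i \<le> hi i" using assms by (auto simp: box_def)
  obtain r where r: "strict_mono r" "\<forall>i<n. convergent (\<lambda>j. x (r j) i)"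
    using bounded_vec_seq_convergent_subseq[of n lo x hi] bounds by blast
  define y where "y i = lim (\<lambda>j. x (r j) i)" for i
  have lim: "\<forall>i<n. (\<lambda>j. x (r j) i) \<longlonglongrightarrow> y i"
    using r(2) by (auto simp: y_def convergent_LIMSEQ_iff)
  have "y \<in> box n lo hi"
    unfolding box_def using lim bounds
    by (auto intro: LIMSEQ_le_const[of "\<lambda>j. x (r j) _"] LIMSEQ_le_const2[of "\<lambda>j. x (r j) _"])
  then show ?thesis using that r(1) lim by blast
qed

lemma eigen_step_Circ_limit:
  assumes n: "0 < n" and a: "\<forall>m t. t < n \<longrightarrow> 0 \<le> a m t" and c: "\<forall>t<n. 0 \<le> c t"
    and a_lim: "\<forall>t<n. (\<lambda>m. a m t) \<longlonglongrightarrow> c t"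
    and x: "\<forall>m. nonneg_vec n (x m)" and y: "nonneg_vec n y"
    and x_lim: "\<forall>k<n. (\<lambda>m. x m k) \<longlonglongrightarrow> y k"
    and step: "\<forall>m. eigen_step n (Circ n (a m)) (x m) N"
  shows "eigen_step n (Circ n c) y N"
  unfolding eigen_step_Circ_iff[OF n c y]
proof (intro allI impI)
  fix i assume "i < n"
  have lim_lhs: "(\<lambda>m. word_max n (a m) (Suc N) (x m) i) \<longlonglongrightarrow> word_max n c (Suc N) y i"
    by (rule tendsto_word_max[OF n a_lim x_lim])
  have "(\<lambda>m. word_max n (a m) (Suc N) (x m) i)
      = (\<lambda>m. (MAX t\<in>{..<n}. a m t) * word_max n (a m) N (x m) i)"
    using step a x \<open>i < n\<close> by (simp add: eigen_step_Circ_iff[OF n])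
  moreover have "(\<lambda>m. (MAX t\<in>{..<n}. a m t) * word_max n (a m) N (x m) i)
      \<longlonglongrightarrow> (MAX t\<in>{..<n}. c t) * word_max n c N y i"
    using n a_lim by (intro tendsto_mult tendsto_word_max[OF n a_lim x_lim] tendsto_Max_finite) auto
  ultimately show "word_max n c (Suc N) y i = (MAX t\<in>{..<n}. c t) * word_max n c N y i"
    using LIMSEQ_unique[OF lim_lhs] by simp
qed

theorem Attr_Circ_meets_box_limit:
  assumes n: "0 < n" and lo: "\<forall>i<n. 0 \<le> lo i"
    and a: "\<forall>m t. t < n \<longrightarrow> 0 \<le> a m t" and c: "\<forall>t<n. 0 \<le> c t"
    and a_lim: "\<forall>t<n. (\<lambda>m. a m t) \<longlonglongrightarrow> c t"
    and meets: "\<forall>m. Attr n (Circ n (a m)) \<inter> box n lo hi \<noteq> {}"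
  shows "Attr n (Circ n c) \<inter> box n lo hi \<noteq> {}"
proof -
  have "\<forall>m. \<exists>x. x \<in> box n lo hi \<and> x \<in> Attr n (Circ n (a m))" using meets by blast
  then obtain x where x: "\<And>m. x m \<in> box n lo hi" "\<And>m. x m \<in> Attr n (Circ n (a m))"
    by metis
  obtain r y where r: "strict_mono r" and y: "y \<in> box n lo hi"
    and lim: "\<forall>i<n. (\<lambda>j. x (r j) i) \<longlonglongrightarrow> y i"
    using box_convergent_subseq[of x] x(1) by blast
  have x_nonneg: "nonneg_vec n (x m)" for m using nonneg_vec_box[OF lo x(1)] .
  have y_nonneg: "nonneg_vec n y" using nonneg_vec_box[OF lo y] .
  have a_nonneg: "\<forall>t<n. 0 \<le> a m t" for m using a by simp
  have steps: "\<forall>j. eigen_step n (Circ n (a (r j))) (x (r j)) (n - 1)"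
    using Attr_Circ_iff_eigen_step[OF n a_nonneg x_nonneg order_refl] x(2) by blast
  have lim_a: "\<forall>t<n. (\<lambda>j. a (r j) t) \<longlonglongrightarrow> c t"
    using a_lim LIMSEQ_subseq_LIMSEQ[OF _ r, of "\<lambda>m. a m _"] by (simp add: o_def)
  have "\<forall>j t. t < n \<longrightarrow> 0 \<le> a (r j) t" and "\<forall>j. nonneg_vec n (x (r j))"
    using a x_nonneg by simp_all
  from eigen_step_Circ_limit[OF n this(1) c lim_a this(2) y_nonneg lim steps]
  have "eigen_step n (Circ n c) y (n - 1)" .
  then have "y \<in> Attr n (Circ n c)"
    using Attr_Circ_iff_eigen_step[OF n c y_nonneg order_refl] by blast
  then show ?thesis using y by blast
qed

section \<open>Tolerance robustness of interval circulants\<close>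

lemma Attr_Circ_meets_box_iff:
  assumes n: "0 < n" and X: "\<forall>i<n. 0 \<le> lo i \<and> lo i \<le> hi i" and c: "\<forall>t<n. 0 \<le> c t"
    and N: "n - 1 \<le> N"
  shows "Attr n (Circ n c) \<inter> box n lo hi \<noteq> {} \<longleftrightarrow>
    (\<not> is_zero_mx n (Circ n c) \<longrightarrow> (\<exists>y\<in>box n lo hi.
       vec_eq n (\<lambda>i. mx_lambda n (Circ n c) * mx_vec n (mx_pow n (Circ n c) N) y i)
                (mx_vec n (mx_pow n (Circ n c) (Suc N)) y)))"
proof (cases "is_zero_mx n (Circ n c)")
  case True
  have "c t = Circ n c 0 t" if "t < n" for t using that by (simp add: Circ_def)
  then have "\<forall>t<n. c t = 0" using True n by (simp add: is_zero_mx_def)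
  moreover have "lo \<in> box n lo hi" and "nonneg_vec n lo" using X by (auto simp: box_def nonneg_vec_def)
  ultimately have "lo \<in> Attr n (Circ n c) \<inter> box n lo hi"
    using Attr_Circ_zero[OF n] by blast
  then show ?thesis using True by blast
next
  case False
  have "y \<in> Attr n (Circ n c) \<longleftrightarrow>
      vec_eq n (\<lambda>i. mx_lambda n (Circ n c) * mx_vec n (mx_pow n (Circ n c) N) y i)
               (mx_vec n (mx_pow n (Circ n c) (Suc N)) y)" if "y \<in> box n lo hi" for y
    using Attr_Circ_iff_eigen_step[OF n c nonneg_vec_box[OF _ that] N] X
    unfolding eigen_step_def vec_eq_def by auto
  then show ?thesis using False by blast
qed

lemma tol_robust_imp_Attr_Ak:
  assumes n: "0 < n" and X: "\<forall>i<n. 0 \<le> xlo i" and alo: "\<forall>t<n. 0 \<le> alo t"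
    and nonempty: "\<forall>t<n. ival (alo t) (ahi t) (lc t) (rc t) \<noteq> {}"
    and robust: "tol_robust n (IC n alo ahi lc rc) (box n xlo xhi)"
  shows "Attr n (Ak n alo ahi k) \<inter> box n xlo xhi \<noteq> {}"
proof -
  define c where "c t = (if t = k then ahi t else alo t)" for t
  have "\<forall>t<n. alo t \<le> ahi t" using nonempty ival_nonempty_le by blast
  then have c_bounds: "\<forall>t<n. alo t \<le> c t \<and> c t \<le> ahi t" by (simp add: c_def)
  obtain a where a: "\<forall>m t. t < n \<longrightarrow> a m t \<in> ival (alo t) (ahi t) (lc t) (rc t)"
    and lim: "\<forall>t. (\<lambda>m. a m t) \<longlonglongrightarrow> c t"
    using ivals_approx_seq[OF nonempty c_bounds] by blast
  have a_nonneg: "\<forall>m t. t < n \<longrightarrow> 0 \<le> a m t" using a alo ival_bounds by (meson order_trans)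
  have c_nonneg: "\<forall>t<n. 0 \<le> c t" using c_bounds alo by (meson order_trans)
  have "\<forall>m. Attr n (Circ n (a m)) \<inter> box n xlo xhi \<noteq> {}"
    using robust a unfolding tol_robust_def IC_def by blast
  with Attr_Circ_meets_box_limit[OF n X a_nonneg c_nonneg] lim show ?thesis
    unfolding Ak_def c_def by blast
qed

lemma Attr_Ak_subset_Attr:
  assumes alo: "\<forall>t<n. 0 \<le> alo t" and bounds: "\<forall>t<n. alo t \<le> a t \<and> a t \<le> ahi t"
    and peak: "circ_peak n a m"
  shows "Attr n (Ak n alo ahi m) \<subseteq> Attr n (Circ n a)"
proof -
  interpret circ_peak n a m by (rule peak)
  define b where "b t = (if t = m then ahi t else alo t)" for t
  have b_peak: "a m \<le> b m" using bounds peak_index by (simp add: b_def)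
  have b_other: "0 \<le> b t \<and> b t \<le> a t" if "t < n" "t \<noteq> m" for t
    using that alo bounds by (simp add: b_def)
  have "circ_peak n b m"
  proof
    show "0 < b m" using b_peak peak_pos by simp
    show "\<forall>t<n. 0 \<le> b t" "\<forall>t<n. b t \<le> b m"
    proof (safe)
      fix t assume "t < n"
      then show "0 \<le> b t" "b t \<le> b m"
        using b_other[of t] b_peak peak_pos peak_max by (cases "t = m"; force)+
    qed
  qed (simp_all add: n_pos peak_index)
  moreover have "\<forall>u<n. peak_weights n b m u \<le> peak_weights n a m u"
  proof (intro allI impI)
    fix u assume "u < n"
    define t where "t = (u + m) mod n"
    have "t < n" using n_pos by (simp add: t_def)
    have "b t / b m \<le> a t / a m"
    proof (cases "t = m")
      case False
      then have "b t / b m \<le> a t / b m" using b_other \<open>t < n\<close> b_peak peak_pos by (simp add: divide_right_mono)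
      also have "\<dots> \<le> a t / a m"
        using b_peak peak_pos entries_nonneg \<open>t < n\<close> by (simp add: frac_le)
      finally show ?thesis .
    qed (use b_peak peak_pos in simp)
    then show "peak_weights n b m u \<le> peak_weights n a m u" by (simp add: peak_weights_def t_def)
  qed
  ultimately show ?thesis
    using Attr_Circ_mono[OF peak] unfolding Ak_def b_def by blast
qed

lemma Attr_Ak_imp_tol_robust:
  assumes n: "0 < n" and X: "\<forall>i<n. 0 \<le> xlo i \<and> xlo i \<le> xhi i" and alo: "\<forall>t<n. 0 \<le> alo t"
    and Ak: "\<forall>k<n. Attr n (Ak n alo ahi k) \<inter> box n xlo xhi \<noteq> {}"
  shows "tol_robust n (IC n alo ahi lc rc) (box n xlo xhi)"
  unfolding tol_robust_def
proof
  fix A assume "A \<in> IC n alo ahi lc rc"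
  then obtain a where A: "A = Circ n a" and bounds: "\<forall>t<n. alo t \<le> a t \<and> a t \<le> ahi t"
    unfolding IC_def using ival_bounds by blast
  have a_nonneg: "\<forall>t<n. 0 \<le> a t" using alo bounds by (meson order_trans)
  show "\<exists>x\<in>box n xlo xhi. x \<in> Attr n A"
    using n a_nonneg
  proof (cases rule: Circ_zero_or_peak)
    case 1
    have "xlo \<in> box n xlo xhi" and "nonneg_vec n xlo" using X by (auto simp: box_def nonneg_vec_def)
    then show ?thesis using Attr_Circ_zero[OF n 1] A by blast
  next
    case (2 m)
    then have "m < n" by (simp add: circ_peak_def)
    then obtain y where "y \<in> Attr n (Ak n alo ahi m)" "y \<in> box n xlo xhi" using Ak by blast
    then show ?thesis using Attr_Ak_subset_Attr[OF alo bounds 2] A by blast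
  qed
qed

theorem theorem4:
  fixes n :: nat and xlo xhi :: "nat \<Rightarrow> real"
    and alo ahi :: "nat \<Rightarrow> real" and lc rc :: "nat \<Rightarrow> bool"
  assumes "1 \<le> n"
    and X: "\<forall>i<n. 0 \<le> xlo i \<and> xlo i \<le> xhi i"
    and a_nonneg: "\<forall>t<n. 0 \<le> alo t"
    and a_nonempty: "\<forall>t<n. ival (alo t) (ahi t) (lc t) (rc t) \<noteq> {}"
  shows "(tol_robust n (IC n alo ahi lc rc) (box n xlo xhi) \<longleftrightarrow>
           (\<forall>k<n. Attr n (Ak n alo ahi k) \<inter> box n xlo xhi \<noteq> {}))
       \<and> (tol_robust n (IC n alo ahi lc rc) (box n xlo xhi) \<longleftrightarrow>
           (\<forall>k<n. \<not> is_zero_mx n (Ak n alo ahi k) \<longrightarrow>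
              (\<exists>y\<in>box n xlo xhi.
                 vec_eq n (\<lambda>i. mx_lambda n (Ak n alo ahi k) * mx_vec n (mx_pow n (Ak n alo ahi k) (n^2)) y i)
                          (mx_vec n (mx_pow n (Ak n alo ahi k) (n^2 + 1)) y))))"
proof -
  have n: "0 < n" using assms(1) by simp
  have robust_iff: "tol_robust n (IC n alo ahi lc rc) (box n xlo xhi) \<longleftrightarrow>
      (\<forall>k<n. Attr n (Ak n alo ahi k) \<inter> box n xlo xhi \<noteq> {})"
  proof
    have "\<forall>i<n. 0 \<le> xlo i" using X by simp
    then show "tol_robust n (IC n alo ahi lc rc) (box n xlo xhi) \<Longrightarrow>
        \<forall>k<n. Attr n (Ak n alo ahi k) \<inter> box n xlo xhi \<noteq> {}"
      using tol_robust_imp_Attr_Ak[OF n _ a_nonneg a_nonempty] by blast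
  qed (rule Attr_Ak_imp_tol_robust[OF n X a_nonneg])
  have "n \<le> n * n" using n by simp
  then have N: "n - 1 \<le> n ^ 2" unfolding power2_eq_square by linarith
  have "\<forall>t<n. alo t \<le> ahi t" using a_nonempty ival_nonempty_le by blast
  then have "\<forall>t<n. 0 \<le> ahi t" using a_nonneg by (auto intro: order_trans)
  then have "\<forall>t<n. 0 \<le> (if t = k then ahi t else alo t)" for k using a_nonneg by simp
  from Attr_Circ_meets_box_iff[OF n X this N]
  have "Attr n (Ak n alo ahi k) \<inter> box n xlo xhi \<noteq> {} \<longleftrightarrow>
      (\<not> is_zero_mx n (Ak n alo ahi k) \<longrightarrow> (\<exists>y\<in>box n xlo xhi.
         vec_eq n (\<lambda>i. mx_lambda n (Ak n alo ahi k) * mx_vec n (mx_pow n (Ak n alo ahi k) (n^2)) y i)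
                  (mx_vec n (mx_pow n (Ak n alo ahi k) (n^2 + 1)) y)))" for k
    unfolding Ak_def by simp
  then show ?thesis using robust_iff by blast
qed

end
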